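(* Let $x\in\mathcal{X}$ and suppose the weights are arithmetic averages $W_{x,N}=\frac1N\sum_{k=1}^N W_x^{(k)}$, where $W_x^{(1)},W_x^{(2)},\dots$ are i.i.d. with law $Q_x$, $W_x^{(k)}>0$ a.s. and $\mathbb{E}_{Q_x}[W_x^{(k)}]=1$. If $\mathbb{E}_{Q_x}[W_x^{-1}]<\infty$ for $W_x\sim Q_x$, then $$\lim_{N\to\infty}\mathbb{E}_{Q_{x,N}}\left[W_{x,N}^{-1}\right]=1,$$ where $Q_{x,N}$ denotes the law of $W_{x,N}$. *)

theory Defs
  imports "HOL-Probability.Probability"
begin

end

theory Submission
  imports Defs "HOL-Probability.Hoeffding"
begin

text \<open>
  By Jensen's inequality \<open>E[1/W\<^sub>N] \<ge> 1/E[W\<^sub>N] = 1\<close>. For the upper bound fix cutoffs \<open>K, L\<close>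
  and a threshold \<open>c = E[min(W,K)] - \<delta>\<close>. Where the sample mean of the truncated weights
  \<open>min(W(k), K)\<close> exceeds \<open>c\<close>, so does \<open>W\<^sub>N\<close>, and \<open>1/W\<^sub>N < 1/c\<close>. Elsewhere the AM-HM
  inequality bounds \<open>1/W\<^sub>N\<close> by the sample mean of the \<open>1/W(k)\<close>, each at most \<open>L\<close> plus
  its part above \<open>L\<close>; those parts have small expectation for large \<open>L\<close>, and by Hoeffding's
  inequality for the bounded truncations that region has probability at most
  \<open>exp(-2N\<delta>\<^sup>2/K\<^sup>2)\<close>. Letting \<open>N \<rightarrow> \<infinity>\<close>, then \<open>K, L \<rightarrow> \<infinity>\<close> and \<open>\<delta> \<rightarrow> 0\<close> gives
  \<open>limsup E[1/W\<^sub>N] \<le> 1\<close>.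
\<close>

definition truncate_at :: "real \<Rightarrow> real \<Rightarrow> real" where
  "truncate_at K x = max 0 (min x K)"

definition inverse_tail :: "real \<Rightarrow> real \<Rightarrow> real" where
  "inverse_tail L x = (if 1 / x > L then 1 / x else 0)"

lemma truncate_at_measurable [measurable]: "truncate_at K \<in> borel_measurable borel"
  unfolding truncate_at_def by measurable

lemma inverse_tail_measurable [measurable]: "inverse_tail L \<in> borel_measurable borel"
  unfolding inverse_tail_def by measurable

lemma inverse_tail_nonneg: "L \<ge> 0 \<Longrightarrow> inverse_tail L x \<ge> 0"
  unfolding inverse_tail_def using order.strict_trans1[of 0 L "1 / x"] by auto

lemma inverse_le_inverse_tail_plus: "L \<ge> 0 \<Longrightarrow> 1 / x \<le> inverse_tail L x + L"
  unfolding inverse_tail_def by (simp add: not_less)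

subsection \<open>Pointwise inequalities\<close>

lemma inverse_ge_tangent:
  fixes w a :: real
  assumes "w > 0" "a > 0"
  shows "2 / a - w / a\<^sup>2 \<le> 1 / w"
proof -
  have "0 \<le> (a - w)\<^sup>2 / (w * a\<^sup>2)" using assms by simp
  also have "(a - w)\<^sup>2 / (w * a\<^sup>2) = 1 / w - (2 / a - w / a\<^sup>2)"
    using assms by (simp add: field_simps power2_eq_square)
  finally show ?thesis by simp
qed

lemma inverse_mean_le_mean_inverse:
  fixes w :: "'i \<Rightarrow> real"
  assumes "finite I" "I \<noteq> {}" "\<And>k. k \<in> I \<Longrightarrow> w k > 0"
  shows "1 / ((\<Sum>k\<in>I. w k) / card I) \<le> (\<Sum>k\<in>I. 1 / w k) / card I"
proof -
  define a where "a = (\<Sum>k\<in>I. w k) / card I"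
  have n: "real (card I) > 0" using assms by auto
  have "(\<Sum>k\<in>I. w k) > 0" using assms by (intro sum_pos) auto
  hence a: "a > 0" using n by (simp add: a_def)
  \<comment> \<open>sum the tangent line of \<open>1/w\<close> at the mean \<open>a\<close>\<close>
  have "(\<Sum>k\<in>I. 2 / a - w k / a\<^sup>2) = card I * (2 / a) - (\<Sum>k\<in>I. w k) / a\<^sup>2"
    by (simp add: sum_subtractf sum_divide_distrib)
  also have "\<dots> = card I / a"
    using a n by (simp add: a_def field_simps power2_eq_square)
  finally have "card I / a = (\<Sum>k\<in>I. 2 / a - w k / a\<^sup>2)" ..
  also have "\<dots> \<le> (\<Sum>k\<in>I. 1 / w k)"
    by (intro sum_mono inverse_ge_tangent assms a)
  finally show ?thesis using n a unfolding a_def[symmetric] by (simp add: field_simps)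
qed

lemma inverse_mean_le_split:
  fixes w :: "'i \<Rightarrow> real"
  assumes "finite I" "I \<noteq> {}" "\<And>k. k \<in> I \<Longrightarrow> w k > 0" "c > 0" "L \<ge> 0"
  shows "1 / ((\<Sum>k\<in>I. w k) / card I) \<le> 1 / c + (\<Sum>k\<in>I. inverse_tail L (w k)) / card I
           + L * (if (\<Sum>k\<in>I. truncate_at K (w k)) / card I \<le> c then 1 else 0)"
proof -
  have n: "real (card I) > 0" using assms by auto
  have tail_nonneg: "(\<Sum>k\<in>I. inverse_tail L (w k)) / card I \<ge> 0"
    using assms(5) by (simp add: sum_nonneg inverse_tail_nonneg)
  show ?thesis
  proof (cases "(\<Sum>k\<in>I. truncate_at K (w k)) / card I \<le> c")
    case True
    have "1 / ((\<Sum>k\<in>I. w k) / card I) \<le> (\<Sum>k\<in>I. 1 / w k) / card I"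
      by (rule inverse_mean_le_mean_inverse) (use assms in auto)
    also have "\<dots> \<le> (\<Sum>k\<in>I. inverse_tail L (w k) + L) / card I"
      using n assms(5) by (intro divide_right_mono sum_mono inverse_le_inverse_tail_plus) auto
    also have "\<dots> = (\<Sum>k\<in>I. inverse_tail L (w k)) / card I + L"
      using n by (simp add: sum.distrib add_divide_distrib)
    finally have "1 / ((\<Sum>k\<in>I. w k) / card I) \<le> (\<Sum>k\<in>I. inverse_tail L (w k)) / card I + L" .
    moreover have "1 / c > 0" using assms(4) by simp
    ultimately show ?thesis unfolding if_P[OF True] by linarith
  next
    case False
    have "(\<Sum>k\<in>I. truncate_at K (w k)) \<le> (\<Sum>k\<in>I. w k)"
      using assms(3) by (intro sum_mono) (force simp: truncate_at_def)
    hence "(\<Sum>k\<in>I. w k) / card I > c"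
      using False n by (meson divide_right_mono not_le order.strict_trans2 of_nat_0_le_iff)
    hence "1 / ((\<Sum>k\<in>I. w k) / card I) \<le> 1 / c"
      using le_imp_inverse_le[of c "(\<Sum>k\<in>I. w k) / card I"] assms(4) by (simp add: inverse_eq_divide)
    thus ?thesis using False tail_nonneg by simp
  qed
qed

subsection \<open>Limits\<close>

lemma tendsto_integral_truncate_at:
  fixes f :: "'a \<Rightarrow> real"
  assumes "integrable M f" "AE x in M. f x \<ge> 0"
  shows "(\<lambda>n. \<integral>x. truncate_at (real n) (f x) \<partial>M) \<longlonglongrightarrow> (\<integral>x. f x \<partial>M)"
proof (rule integral_dominated_convergence[where w="\<lambda>x. norm (f x)"])
  show "AE x in M. (\<lambda>n. truncate_at (real n) (f x)) \<longlonglongrightarrow> f x"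
    using assms(2)
  proof eventually_elim
    case (elim x)
    obtain n0 :: nat where "f x < n0" using reals_Archimedean2 by blast
    hence "eventually (\<lambda>n. truncate_at (real n) (f x) = f x) sequentially"
      unfolding eventually_sequentially truncate_at_def using elim by (intro exI[of _ n0]) auto
    thus ?case by (rule tendsto_eventually)
  qed
qed (use assms(1) in \<open>auto simp: truncate_at_def\<close>)

lemma tendsto_integral_inverse_tail:
  fixes f :: "'a \<Rightarrow> real"
  assumes [measurable]: "f \<in> borel_measurable M" and "integrable M (\<lambda>x. 1 / f x)"
  shows "(\<lambda>n. \<integral>x. inverse_tail (real n) (f x) \<partial>M) \<longlonglongrightarrow> 0"
proof -
  have "(\<lambda>n. \<integral>x. inverse_tail (real n) (f x) \<partial>M) \<longlonglongrightarrow> (\<integral>x. 0 \<partial>M)"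
  proof (rule integral_dominated_convergence[where w="\<lambda>x. norm (1 / f x)"])
    show "AE x in M. (\<lambda>n. inverse_tail (real n) (f x)) \<longlonglongrightarrow> 0"
    proof (rule AE_I2)
      fix x
      obtain n0 :: nat where "1 / f x < n0" using reals_Archimedean2 by blast
      hence "eventually (\<lambda>n. inverse_tail (real n) (f x) = 0) sequentially"
        unfolding eventually_sequentially inverse_tail_def by (intro exI[of _ n0]) auto
      thus "(\<lambda>n. inverse_tail (real n) (f x)) \<longlonglongrightarrow> 0" by (rule tendsto_eventually)
    qed
    show "integrable M (\<lambda>x. norm (1 / f x))" using assms(2) by (rule integrable_norm)
  qed (auto simp: inverse_tail_def)
  thus ?thesis by simp
qed

lemma tendsto_exp_neg_linear: "c > 0 \<Longrightarrow> (\<lambda>N. exp (- (c * real N))) \<longlonglongrightarrow> 0"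
  by (rule filterlim_compose[OF exp_at_bot filterlim_compose[OF filterlim_uminus_at_bot_at_top
        filterlim_tendsto_pos_mult_at_top[OF tendsto_const _ filterlim_real_sequentially]]])

lemma tendsto_1_if_ge_1_and_eventually_less:
  fixes f :: "nat \<Rightarrow> real"
  assumes "\<And>N. N \<ge> 1 \<Longrightarrow> f N \<ge> 1" "\<And>e. e > 0 \<Longrightarrow> eventually (\<lambda>N. f N < 1 + e) sequentially"
  shows "f \<longlonglongrightarrow> 1"
proof (rule tendstoI)
  fix e :: real assume "e > 0"
  with assms(2) have "eventually (\<lambda>N. f N < 1 + e \<and> N \<ge> 1) sequentially"
    by (intro eventually_conj eventually_ge_at_top) auto
  thus "eventually (\<lambda>N. dist (f N) 1 < e) sequentially"
    by eventually_elim (use assms(1) in \<open>force simp: dist_real_def\<close>)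
qed

subsection \<open>Averages of i.i.d.\ positive weights\<close>

locale iid_positive_weights = prob_space M
  for M :: "'a measure" and Q :: "real measure" and W :: "nat \<Rightarrow> 'a \<Rightarrow> real" +
  assumes indep: "indep_vars (\<lambda>_. borel) W UNIV"
    and distr_W: "\<And>k. distr M borel (W k) = Q"
    and AE_Q_pos: "AE w in Q. w > 0"
    and integrable_Q: "integrable Q (\<lambda>w. w)"
    and mean_Q: "(\<integral>w. w \<partial>Q) = 1"
    and integrable_inverse_Q: "integrable Q (\<lambda>w. 1 / w)"
begin

lemma W_measurable [measurable]: "W k \<in> borel_measurable M"
  using indep unfolding indep_vars_def by auto

definition mean_weight :: "nat \<Rightarrow> 'a \<Rightarrow> real" where
  "mean_weight N \<omega> = (\<Sum>k\<in>{1..N}. W k \<omega>) / real N"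

lemma mean_weight_measurable [measurable]: "mean_weight N \<in> borel_measurable M"
  unfolding mean_weight_def by measurable

lemma integral_W:
  fixes g :: "real \<Rightarrow> real"
  assumes "g \<in> borel_measurable borel"
  shows "(\<integral>\<omega>. g (W k \<omega>) \<partial>M) = (\<integral>w. g w \<partial>Q)"
  using integral_distr[of "W k" M borel g] assms by (simp add: distr_W)

lemma integrable_W:
  fixes g :: "real \<Rightarrow> real"
  assumes "g \<in> borel_measurable borel"
  shows "integrable M (\<lambda>\<omega>. g (W k \<omega>)) \<longleftrightarrow> integrable Q g"
  using integrable_distr_eq[of "W k" M borel g] assms by (simp add: distr_W)

lemma AE_W_pos: "AE \<omega> in M. \<forall>k. W k \<omega> > 0"
proof -
  have "AE \<omega> in M. W k \<omega> > 0" for k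
    using AE_Q_pos unfolding distr_W[of k, symmetric] by (subst (asm) AE_distr_iff) auto
  thus ?thesis by (simp add: AE_all_countable)
qed

lemma integrable_W_self: "integrable M (W k)"
  using integrable_W[of "\<lambda>w. w" k] integrable_Q by (simp only: measurable_ident_sets)

lemma expectation_W: "expectation (W k) = 1"
  using integral_W[of "\<lambda>w. w" k] mean_Q by (simp only: measurable_ident_sets)

lemma integrable_inverse_W: "integrable M (\<lambda>\<omega>. 1 / W k \<omega>)"
  using integrable_W[of "\<lambda>w. 1 / w" k] integrable_inverse_Q by simp

lemma sets_Q: "sets Q = sets borel"
  using sets_distr[of M borel "W 0"] by (simp only: distr_W)

lemma tendsto_integral_truncate_at_Q: "(\<lambda>n. \<integral>w. truncate_at (real n) w \<partial>Q) \<longlonglongrightarrow> 1"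
  using tendsto_integral_truncate_at[of Q "\<lambda>w. w"] integrable_Q mean_Q AE_Q_pos
  by (simp add: eventually_mono)

lemma tendsto_integral_inverse_tail_Q: "(\<lambda>n. \<integral>w. inverse_tail (real n) w \<partial>Q) \<longlonglongrightarrow> 0"
  using tendsto_integral_inverse_tail[of "\<lambda>w. w" Q] integrable_inverse_Q
  by (simp add: measurable_ident_sets sets_Q)

lemma integrable_mean_weight: "integrable M (mean_weight N)"
  unfolding mean_weight_def
  by (intro integrable_divide Bochner_Integration.integrable_sum integrable_W_self)

lemma expectation_mean_weight: "N \<ge> 1 \<Longrightarrow> expectation (mean_weight N) = 1"
  unfolding mean_weight_def[abs_def]
  using integrable_W_self expectation_W by (simp add: Bochner_Integration.integral_sum)

lemma integrable_inverse_mean_weight: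
  assumes "N \<ge> 1"
  shows "integrable M (\<lambda>\<omega>. 1 / mean_weight N \<omega>)"
proof (rule Bochner_Integration.integrable_bound)
  show "integrable M (\<lambda>\<omega>. (\<Sum>k\<in>{1..N}. 1 / W k \<omega>) / real N)"
    by (intro integrable_divide Bochner_Integration.integrable_sum integrable_inverse_W)
  show "AE \<omega> in M. norm (1 / mean_weight N \<omega>) \<le> norm ((\<Sum>k\<in>{1..N}. 1 / W k \<omega>) / real N)"
    using AE_W_pos
  proof eventually_elim
    case (elim \<omega>)
    have "0 < mean_weight N \<omega>"
      using elim assms unfolding mean_weight_def by (intro divide_pos_pos sum_pos) auto
    moreover have "1 / mean_weight N \<omega> \<le> (\<Sum>k\<in>{1..N}. 1 / W k \<omega>) / real N"
      using inverse_mean_le_mean_inverse[of "{1..N}" "\<lambda>k. W k \<omega>"] elim assms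
      by (simp add: mean_weight_def)
    moreover have "(\<Sum>k\<in>{1..N}. 1 / W k \<omega>) / real N \<le> \<bar>\<Sum>k\<in>{1..N}. 1 / W k \<omega>\<bar> / real N"
      by (intro divide_right_mono) auto
    ultimately show ?case by simp
  qed
qed simp

lemma integral_inverse_mean_weight_ge_1:
  assumes "N \<ge> 1"
  shows "(\<integral>\<omega>. 1 / mean_weight N \<omega> \<partial>M) \<ge> 1"
proof -
  have "AE \<omega> in M. mean_weight N \<omega> \<in> {0<..}"
    using AE_W_pos
    by eventually_elim (use assms in \<open>auto simp: mean_weight_def intro!: divide_pos_pos sum_pos\<close>)
  hence "inverse (expectation (mean_weight N)) \<le> expectation (\<lambda>\<omega>. inverse (mean_weight N \<omega>))"
    using integrable_inverse_mean_weight[OF assms] integrable_mean_weight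
    by (intro jensens_inequality[where I="{0<..}"] convex_on_inverse) (auto simp: inverse_eq_divide)
  thus ?thesis using expectation_mean_weight[OF assms] by (simp add: inverse_eq_divide)
qed

lemma prob_truncated_mean_le:
  assumes "N \<ge> 1" "K > 0" "\<delta> \<ge> 0"
  shows "prob {\<omega>\<in>space M. (\<Sum>k\<in>{1..N}. truncate_at K (W k \<omega>)) / real N
            \<le> (\<integral>w. truncate_at K w \<partial>Q) - \<delta>}
         \<le> exp (- 2 * real N * \<delta>\<^sup>2 / K\<^sup>2)"
proof -
  interpret Hoeffding_ineq_iid M "{1..N}" "\<lambda>k \<omega>. truncate_at K (W k \<omega>)"
    "\<lambda>\<omega>. truncate_at K (W 0 \<omega>)" 0 K "\<integral>w. truncate_at K w \<partial>Q"
  proof unfold_locales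
    show "indep_vars (\<lambda>_. borel) (\<lambda>k \<omega>. truncate_at K (W k \<omega>)) {1..N}"
      by (rule indep_vars_subset[OF indep_vars_compose2[OF indep]]) auto
    show "distr M borel (\<lambda>\<omega>. truncate_at K (W i \<omega>)) = distr M borel (\<lambda>\<omega>. truncate_at K (W 0 \<omega>))"
      for i
      using distr_distr[of "truncate_at K" borel borel "W i" M]
        distr_distr[of "truncate_at K" borel borel "W 0" M] distr_W
      by (simp add: comp_def)
    show "AE \<omega> in M. truncate_at K (W 0 \<omega>) \<in> {0..K}"
      using assms(2) by (auto simp: truncate_at_def)
  qed (auto simp: integral_W)
  show ?thesis using Hoeffding_ineq_le'[of \<delta>] assms by simp
qed

lemma integrable_inverse_tail_W: "integrable M (\<lambda>\<omega>. inverse_tail L (W k \<omega>))"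
  by (rule Bochner_Integration.integrable_bound[OF integrable_inverse_W]) (auto simp: inverse_tail_def)

lemma integral_inverse_mean_weight_le_split:
  fixes K :: real
  assumes N: "N \<ge> 1" and c: "c > 0" and L: "L \<ge> 0"
  defines "B \<equiv> {\<omega>\<in>space M. (\<Sum>k\<in>{1..N}. truncate_at K (W k \<omega>)) / real N \<le> c}"
  shows "(\<integral>\<omega>. 1 / mean_weight N \<omega> \<partial>M) \<le> 1 / c + (\<integral>w. inverse_tail L w \<partial>Q) + L * prob B"
proof -
  have B [measurable]: "B \<in> events" unfolding B_def by measurable
  define bound where "bound \<omega> = 1 / c + (\<Sum>k\<in>{1..N}. inverse_tail L (W k \<omega>)) / real N
    + L * indicator B \<omega>" for \<omega>
  have integrable_indicator: "integrable M (indicator B :: 'a \<Rightarrow> real)"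
    using B by (intro integrable_real_indicator) (auto simp: emeasure_eq_measure)
  have integrable_tail_mean: "integrable M (\<lambda>\<omega>. (\<Sum>k\<in>{1..N}. inverse_tail L (W k \<omega>)) / real N)"
    by (intro integrable_divide Bochner_Integration.integrable_sum integrable_inverse_tail_W)
  have "(\<integral>\<omega>. 1 / mean_weight N \<omega> \<partial>M) \<le> (\<integral>\<omega>. bound \<omega> \<partial>M)"
  proof (rule integral_mono_AE)
    show "integrable M bound"
      unfolding bound_def using integrable_indicator integrable_tail_mean by simp
    show "AE \<omega> in M. 1 / mean_weight N \<omega> \<le> bound \<omega>"
      using AE_W_pos
    proof (rule AE_mp[OF _ AE_I2], intro impI)
      fix \<omega> assume \<omega>: "\<omega> \<in> space M" and "\<forall>k. 0 < W k \<omega>"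
      hence "1 / mean_weight N \<omega> \<le> 1 / c + (\<Sum>k\<in>{1..N}. inverse_tail L (W k \<omega>)) / real N
          + L * (if (\<Sum>k\<in>{1..N}. truncate_at K (W k \<omega>)) / real N \<le> c then 1 else 0)"
        using inverse_mean_le_split[of "{1..N}" "\<lambda>k. W k \<omega>" c L K] N c L
        unfolding mean_weight_def by simp
      moreover have "(indicator B \<omega> :: real)
          = (if (\<Sum>k\<in>{1..N}. truncate_at K (W k \<omega>)) / real N \<le> c then 1 else 0)"
        using \<omega> by (simp add: B_def)
      ultimately show "1 / mean_weight N \<omega> \<le> bound \<omega>"
        by (simp add: bound_def)
    qed
  qed (rule integrable_inverse_mean_weight[OF N])
  also have "(\<integral>\<omega>. (\<Sum>k\<in>{1..N}. inverse_tail L (W k \<omega>)) / real N \<partial>M)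
      = (\<integral>w. inverse_tail L w \<partial>Q)"
    using N integrable_inverse_tail_W integral_W[OF inverse_tail_measurable]
    by (simp add: Bochner_Integration.integral_sum)
  hence "(\<integral>\<omega>. bound \<omega> \<partial>M) = 1 / c + (\<integral>w. inverse_tail L w \<partial>Q) + L * prob B"
    using integrable_indicator integrable_tail_mean
    unfolding bound_def by (simp add: emeasure_space_1 measure_def Int_absorb2)
  finally show ?thesis .
qed

lemma integral_inverse_mean_weight_le:
  assumes "N \<ge> 1" "K > 0" "L \<ge> 0" "0 \<le> \<delta>" "\<delta> < (\<integral>w. truncate_at K w \<partial>Q)"
  shows "(\<integral>\<omega>. 1 / mean_weight N \<omega> \<partial>M)
           \<le> 1 / ((\<integral>w. truncate_at K w \<partial>Q) - \<delta>) + (\<integral>w. inverse_tail L w \<partial>Q)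
             + L * exp (- 2 * real N * \<delta>\<^sup>2 / K\<^sup>2)"
  using integral_inverse_mean_weight_le_split[of N "(\<integral>w. truncate_at K w \<partial>Q) - \<delta>" L K]
    mult_left_mono[OF prob_truncated_mean_le[of N K \<delta>] \<open>L \<ge> 0\<close>] assms
  by simp

lemma eventually_integral_inverse_mean_weight_less:
  assumes "e > 0"
  shows "eventually (\<lambda>N. (\<integral>\<omega>. 1 / mean_weight N \<omega> \<partial>M) < 1 + e) sequentially"
proof -
  obtain L :: nat where L: "(\<integral>w. inverse_tail (real L) w \<partial>Q) < e / 3"
    using order_tendstoD(2)[OF tendsto_integral_inverse_tail_Q, of "e / 3"] assms
    by (auto simp: eventually_sequentially)
  \<comment> \<open>any margin \<open>\<delta> > 0\<close> kills the Hoeffding term as \<open>N \<rightarrow> \<infinity>\<close>; \<open>\<delta> = 1/K\<close> also lets \<open>1/c \<rightarrow> 1\<close>\<close>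
  have margin: "(\<lambda>n. (\<integral>w. truncate_at (real n) w \<partial>Q) - 1 / real n) \<longlonglongrightarrow> 1"
    using tendsto_diff[OF tendsto_integral_truncate_at_Q lim_const_over_n[of 1]] by simp
  hence "(\<lambda>n. 1 / ((\<integral>w. truncate_at (real n) w \<partial>Q) - 1 / real n)) \<longlonglongrightarrow> 1"
    using tendsto_divide[OF tendsto_const[of 1] margin] by simp
  hence "eventually (\<lambda>n. 1 / ((\<integral>w. truncate_at (real n) w \<partial>Q) - 1 / real n) < 1 + e / 3
      \<and> (\<integral>w. truncate_at (real n) w \<partial>Q) - 1 / real n > 0 \<and> n \<ge> 1) sequentially"
    using assms by (intro eventually_conj order_tendstoD(2) order_tendstoD(1)[OF margin]
      eventually_ge_at_top) auto
  then obtain K :: nat where K: "1 / ((\<integral>w. truncate_at (real K) w \<partial>Q) - 1 / real K) < 1 + e / 3"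
    "(\<integral>w. truncate_at (real K) w \<partial>Q) - 1 / real K > 0" "K \<ge> 1"
    by (auto simp: eventually_sequentially)
  define r where "r = 2 / real K ^ 4"
  have "(\<lambda>N. real L * exp (- (r * real N))) \<longlonglongrightarrow> real L * 0"
    using K(3) by (intro tendsto_mult tendsto_const tendsto_exp_neg_linear) (auto simp: r_def)
  hence "eventually (\<lambda>N. real L * exp (- (r * real N)) < e / 3 \<and> N \<ge> 1) sequentially"
    using assms by (intro eventually_conj order_tendstoD(2) eventually_ge_at_top) auto
  thus ?thesis
  proof eventually_elim
    case (elim N)
    have "(\<integral>\<omega>. 1 / mean_weight N \<omega> \<partial>M)
        \<le> 1 / ((\<integral>w. truncate_at (real K) w \<partial>Q) - 1 / real K)
          + (\<integral>w. inverse_tail (real L) w \<partial>Q)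
          + real L * exp (- 2 * real N * (1 / real K)\<^sup>2 / (real K)\<^sup>2)"
      using K elim by (intro integral_inverse_mean_weight_le) auto
    also have "- 2 * real N * (1 / real K)\<^sup>2 / (real K)\<^sup>2 = - (r * real N)"
      by (simp add: r_def power2_eq_square power4_eq_xxxx)
    finally show ?case using K(1) L elim by linarith
  qed
qed

lemma tendsto_integral_inverse_mean_weight:
  "(\<lambda>N. \<integral>\<omega>. 1 / mean_weight N \<omega> \<partial>M) \<longlonglongrightarrow> 1"
  by (rule tendsto_1_if_ge_1_and_eventually_less[OF integral_inverse_mean_weight_ge_1
        eventually_integral_inverse_mean_weight_less])

end

theorem proposition3p9:
  fixes M :: "'a measure" and Q :: "real measure" and W :: "nat \<Rightarrow> 'a \<Rightarrow> real"
  assumes "prob_space M"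
    and "prob_space.indep_vars M (\<lambda>_. borel) W UNIV"
    and "\<And>k. distr M borel (W k) = Q"
    and "AE w in Q. w > 0"
    and "integrable Q (\<lambda>w. w)"
    and "(\<integral>w. w \<partial>Q) = 1"
    and "integrable Q (\<lambda>w. 1 / w)"
  shows "(\<lambda>N. \<integral>w. 1 / w \<partial>(distr M borel (\<lambda>\<omega>. (\<Sum>k\<in>{1..N}. W k \<omega>) / real N)))
           \<longlonglongrightarrow> 1"
proof -
  interpret iid_positive_weights M Q W
    by (rule iid_positive_weights.intro[OF assms(1)]) (unfold_locales; fact assms)+
  have "(\<integral>w. 1 / w \<partial>(distr M borel (\<lambda>\<omega>. (\<Sum>k\<in>{1..N}. W k \<omega>) / real N)))
      = (\<integral>\<omega>. 1 / mean_weight N \<omega> \<partial>M)" for N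
    unfolding mean_weight_def by (subst integral_distr) auto
  thus ?thesis using tendsto_integral_inverse_mean_weight by simp
qed

end
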